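(* Let $\Sigma$ be an alphabet. The transition systems labelled on $\Sigma$ are exactly the objects of the slice topos $\mathcal{G}/\Sigma$ which are separated for the double negation topology of $\mathcal{G}/\Sigma$.
   Context: $\mathcal{G}=\mathbf{Sets}^{\Gamma^{op}}$ is the topos of graphs ($\Gamma$ has objects $N,A$ and arrows $s,t:N\to A$; a graph has nodes, arcs and source/target maps, with parallel arcs and self-loops allowed; morphisms preserve source and target). For a set $\Sigma$, also denote by $\Sigma$ the graph with one node and arc set $\Sigma$. The slice topos $\mathcal{G}/\Sigma$ has as objects morphisms $g:G\to\Sigma$ (i.e., graphs whose arcs are labelled by elements of $\Sigma$) and as morphisms label-preserving graph morphisms. A transition system labelled on $\Sigma$ is an object $g:G\to\Sigma$ such that for every pair of nodes $x,y$ and every $\alpha\in\Sigma$ there is at most one arc from $x$ to $y$ labelled $\alpha$. The double negation topology of a topos is $\neg\neg:\Omega\to\Omega$, where $\neg$ is the classifying map of false $\perp:1\to\Omega$. An object $X$ is separated for a topology $j$ if for every object $Y$, every $j$-dense subobject $m:S\hookrightarrow Y$ (one whose closure, classified by $j\circ\chi_m$, is $Y$) and every $f:S\to X$ there is at most one $h:Y\to X$ with $h\circ m=f$. *)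

theory Defs
  imports Main
begin

text \<open>Objects of the slice topos G/Sigma: graphs (node set, arc set, source and
target maps) with arcs labelled in the alphabet Sigma.\<close>

record ('n, 'a, 's) lgraph =
  nodes :: "'n set"
  arcs  :: "'a set"
  src   :: "'a \<Rightarrow> 'n"
  tgt   :: "'a \<Rightarrow> 'n"
  lab   :: "'a \<Rightarrow> 's"

definition wf_lgraph :: "'s set \<Rightarrow> ('n, 'a, 's) lgraph \<Rightarrow> bool" where
  "wf_lgraph \<Sigma> G \<longleftrightarrow>
     (\<forall>e\<in>arcs G. src G e \<in> nodes G \<and> tgt G e \<in> nodes G \<and> lab G e \<in> \<Sigma>)"

text \<open>Morphisms of G/Sigma: label-preserving graph morphisms, given by a node map and an arc map
(only their values on the carriers matter).\<close>

definition lhom ::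
  "('n, 'a, 's) lgraph \<Rightarrow> ('m, 'b, 's) lgraph \<Rightarrow> ('n \<Rightarrow> 'm) \<Rightarrow> ('a \<Rightarrow> 'b) \<Rightarrow> bool" where
  "lhom G H fN fA \<longleftrightarrow>
     (\<forall>x\<in>nodes G. fN x \<in> nodes H) \<and>
     (\<forall>e\<in>arcs G. fA e \<in> arcs H \<and> src H (fA e) = fN (src G e) \<and>
                  tgt H (fA e) = fN (tgt G e) \<and> lab H (fA e) = lab G e)"

text \<open>Subobjects of Y in G/Sigma are subgraphs (with the inherited labelling),
given by a node set and an arc set closed under source and target.\<close>

definition subgraph :: "('n, 'a, 's) lgraph \<Rightarrow> 'n set \<times> 'a set \<Rightarrow> bool" where
  "subgraph Y S \<longleftrightarrow> fst S \<subseteq> nodes Y \<and> snd S \<subseteq> arcs Y \<and>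
     (\<forall>e\<in>snd S. src Y e \<in> fst S \<and> tgt Y e \<in> fst S)"

text \<open>Negation on subobjects (the operation classified by composing with the negation
map on Omega): the pseudo-complement, i.e. the largest subobject disjoint from S.\<close>

definition sub_neg :: "('n, 'a, 's) lgraph \<Rightarrow> 'n set \<times> 'a set \<Rightarrow> 'n set \<times> 'a set" where
  "sub_neg Y S =
    (\<Union>{fst T | T. subgraph Y T \<and> fst T \<inter> fst S = {} \<and> snd T \<inter> snd S = {}},
     \<Union>{snd T | T. subgraph Y T \<and> fst T \<inter> fst S = {} \<and> snd T \<inter> snd S = {}})"

definition nn_closure :: "('n, 'a, 's) lgraph \<Rightarrow> 'n set \<times> 'a set \<Rightarrow> 'n set \<times> 'a set" where
  "nn_closure Y S = sub_neg Y (sub_neg Y S)"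

definition nn_dense :: "('n, 'a, 's) lgraph \<Rightarrow> 'n set \<times> 'a set \<Rightarrow> bool" where
  "nn_dense Y S \<longleftrightarrow> subgraph Y S \<and> nn_closure Y S = (nodes Y, arcs Y)"

definition separated_against :: "('m, 'b, 's) lgraph \<Rightarrow> ('n, 'a, 's) lgraph \<Rightarrow> bool" where
  "separated_against Y X \<longleftrightarrow>
     (\<forall>S hN hA kN kA. nn_dense Y S \<longrightarrow> lhom Y X hN hA \<longrightarrow> lhom Y X kN kA \<longrightarrow>
        (\<forall>x\<in>fst S. hN x = kN x) \<longrightarrow> (\<forall>e\<in>snd S. hA e = kA e) \<longrightarrow>
        (\<forall>x\<in>nodes Y. hN x = kN x) \<and> (\<forall>e\<in>arcs Y. hA e = kA e))"

definition transition_system :: "('n, 'a, 's) lgraph \<Rightarrow> bool" where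
  "transition_system G \<longleftrightarrow>
     (\<forall>e1\<in>arcs G. \<forall>e2\<in>arcs G. src G e1 = src G e2 \<and> tgt G e1 = tgt G e2 \<and>
        lab G e1 = lab G e2 \<longrightarrow> e1 = e2)"

end

theory Submission
  imports Defs
begin

text \<open>A subgraph S of Y is \<open>\<not>\<not>\<close>-dense exactly when it contains every node of Y: the
pseudo-complement of such an S is empty, whereas a node outside S spans a nonempty subgraph
disjoint from S. Hence separatedness of X says that two morphisms into X agreeing on nodes agree
on arcs, i.e. that an arc of X is determined by its endpoints and its label. For the converse it
suffices to test against a single arc, whose discrete subgraph on its endpoints is dense.\<close>

lemma subgraph_sub_neg: "subgraph Y (sub_neg Y S)"
  unfolding subgraph_def sub_neg_def by (simp add: Union_least) blast

lemma sub_neg_disjoint: "fst (sub_neg Y S) \<inter> fst S = {}" "snd (sub_neg Y S) \<inter> snd S = {}"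
  unfolding sub_neg_def by auto

lemma subgraph_le_sub_neg:
  assumes "subgraph Y T" "fst T \<inter> fst S = {}" "snd T \<inter> snd S = {}"
  shows "fst T \<subseteq> fst (sub_neg Y S)" "snd T \<subseteq> snd (sub_neg Y S)"
  using assms unfolding sub_neg_def by (cases T; fastforce)+

lemma nn_dense_imp_subgraph_whole:
  assumes "nn_dense Y S"
  shows "subgraph Y (nodes Y, arcs Y)"
  using assms subgraph_sub_neg[of Y "sub_neg Y S"]
  unfolding nn_dense_def nn_closure_def by simp

lemma sub_neg_spanning:
  assumes "subgraph Y S" "nodes Y \<subseteq> fst S"
  shows "sub_neg Y S = ({}, {})"
proof -
  have "fst (sub_neg Y S) = {}"
    using subgraph_sub_neg[of Y S] sub_neg_disjoint(1)[of Y S] assms(2)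
    unfolding subgraph_def by blast
  moreover then have "snd (sub_neg Y S) = {}"
    using subgraph_sub_neg[of Y S] unfolding subgraph_def by blast
  ultimately show ?thesis by (simp add: prod_eq_iff)
qed

lemma sub_neg_empty:
  assumes "subgraph Y (nodes Y, arcs Y)"
  shows "sub_neg Y ({}, {}) = (nodes Y, arcs Y)"
  using subgraph_sub_neg[of Y "({}, {})"] subgraph_le_sub_neg[OF assms, of "({}, {})"]
  unfolding subgraph_def by (simp add: prod_eq_iff subset_antisym)

lemma nn_dense_iff_spanning:
  assumes "subgraph Y (nodes Y, arcs Y)"
  shows "nn_dense Y S \<longleftrightarrow> subgraph Y S \<and> nodes Y \<subseteq> fst S"
proof safe
  fix x assume dense: "nn_dense Y S" and x: "x \<in> nodes Y"
  show "x \<in> fst S"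
  proof (rule ccontr)
    assume "x \<notin> fst S"
    with x have "x \<in> fst (sub_neg Y S)"
      using subgraph_le_sub_neg(1)[of Y "({x}, {})" S] by (auto simp: subgraph_def)
    moreover have "x \<in> fst (sub_neg Y (sub_neg Y S))"
      using dense x by (simp add: nn_dense_def nn_closure_def)
    ultimately show False
      using sub_neg_disjoint(1)[of Y "sub_neg Y S"] by blast
  qed
qed (use assms in \<open>simp_all add: nn_dense_def nn_closure_def sub_neg_spanning sub_neg_empty\<close>)

lemma lhom_into_transition_system_unique:
  assumes "transition_system G" "subgraph Y (nodes Y, arcs Y)"
    and "lhom Y G hN hA" "lhom Y G kN kA" "\<forall>x\<in>nodes Y. hN x = kN x"
  shows "\<forall>e\<in>arcs Y. hA e = kA e"
proof
  fix e assume e: "e \<in> arcs Y"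
  then have "src Y e \<in> nodes Y" "tgt Y e \<in> nodes Y"
    using assms(2) by (auto simp: subgraph_def)
  with e assms(3-5) have "hA e \<in> arcs G" "kA e \<in> arcs G"
    "src G (hA e) = src G (kA e)" "tgt G (hA e) = tgt G (kA e)" "lab G (hA e) = lab G (kA e)"
    by (simp_all add: lhom_def)
  with assms(1) show "hA e = kA e"
    unfolding transition_system_def by blast
qed

lemma transition_system_imp_separated_against:
  assumes "transition_system G"
  shows "separated_against Y G"
  unfolding separated_against_def
proof (intro allI impI conjI)
  fix S hN hA kN kA
  assume dense: "nn_dense Y S" and "lhom Y G hN hA" "lhom Y G kN kA"
    and "\<forall>x\<in>fst S. hN x = kN x"
  moreover have "subgraph Y (nodes Y, arcs Y)"
    using dense by (rule nn_dense_imp_subgraph_whole)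
  ultimately show "\<forall>x\<in>nodes Y. hN x = kN x"
    using nn_dense_iff_spanning by blast
  show "\<forall>e\<in>arcs Y. hA e = kA e"
    by (rule lhom_into_transition_system_unique) fact+
qed

text \<open>The copy of the arc e alone; the sum types only match the node and arc types over which
the separatedness condition of the theorem quantifies.\<close>

definition arc_graph :: "('n, 'a, 's) lgraph \<Rightarrow> 'a \<Rightarrow> ('n + 'c, 'a + 'd, 's) lgraph" where
  "arc_graph G e =
    \<lparr>nodes = {Inl (src G e), Inl (tgt G e)}, arcs = {Inl e},
     src = \<lambda>_. Inl (src G e), tgt = \<lambda>_. Inl (tgt G e), lab = \<lambda>_. lab G e\<rparr>"

lemma wf_arc_graph: "lab G e \<in> \<Sigma> \<Longrightarrow> wf_lgraph \<Sigma> (arc_graph G e)"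
  by (simp add: wf_lgraph_def arc_graph_def)

lemma nn_dense_arc_graph_nodes: "nn_dense (arc_graph G e) (nodes (arc_graph G e), {})"
  by (simp add: nn_dense_iff_spanning subgraph_def arc_graph_def)

lemma lhom_arc_graph_parallel:
  assumes "wf_lgraph \<Sigma> G" "e' \<in> arcs G"
    and "src G e' = src G e" "tgt G e' = tgt G e" "lab G e' = lab G e"
  shows "lhom (arc_graph G e) G projl (\<lambda>_. e')"
  using assms by (auto simp: lhom_def arc_graph_def wf_lgraph_def)

lemma separated_against_arc_graph_imp_eq:
  assumes "wf_lgraph \<Sigma> G" "separated_against (arc_graph G e1 :: ('n + 'c, 'a + 'd, 's) lgraph) G"
    and "e1 \<in> arcs G" "e2 \<in> arcs G"
    and "src G e1 = src G e2" "tgt G e1 = tgt G e2" "lab G e1 = lab G e2"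
  shows "e1 = e2"
proof -
  have "lhom (arc_graph G e1 :: ('n + 'c, 'a + 'd, 's) lgraph) G projl (\<lambda>_. e1)"
       "lhom (arc_graph G e1 :: ('n + 'c, 'a + 'd, 's) lgraph) G projl (\<lambda>_. e2)"
    using assms by (simp_all add: lhom_arc_graph_parallel)
  then show ?thesis
    using assms(2) nn_dense_arc_graph_nodes
    unfolding separated_against_def by (fastforce simp: arc_graph_def)
qed

theorem theorem5:
  fixes \<Sigma> :: "'s set" and G :: "('n, 'a, 's) lgraph"
  assumes "wf_lgraph \<Sigma> G"
  shows "transition_system G \<longleftrightarrow>
    (\<forall>Y :: ('n + 'c, 'a + 'd, 's) lgraph. wf_lgraph \<Sigma> Y \<longrightarrow> separated_against Y G)"
proof
  assume "transition_system G"
  then show "\<forall>Y :: ('n + 'c, 'a + 'd, 's) lgraph. wf_lgraph \<Sigma> Y \<longrightarrow> separated_against Y G"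
    by (simp add: transition_system_imp_separated_against)
next
  assume separated: "\<forall>Y :: ('n + 'c, 'a + 'd, 's) lgraph. wf_lgraph \<Sigma> Y \<longrightarrow> separated_against Y G"
  show "transition_system G"
    unfolding transition_system_def
  proof (intro ballI impI)
    fix e1 e2 assume e1: "e1 \<in> arcs G" and e2: "e2 \<in> arcs G"
      and parallel: "src G e1 = src G e2 \<and> tgt G e1 = tgt G e2 \<and> lab G e1 = lab G e2"
    have "lab G e1 \<in> \<Sigma>"
      using assms e1 by (simp add: wf_lgraph_def)
    then have "wf_lgraph \<Sigma> (arc_graph G e1 :: ('n + 'c, 'a + 'd, 's) lgraph)"
      by (rule wf_arc_graph)
    with separated have "separated_against (arc_graph G e1 :: ('n + 'c, 'a + 'd, 's) lgraph) G"
      by blast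
    with assms e1 e2 parallel show "e1 = e2"
      by (blast intro: separated_against_arc_graph_imp_eq)
  qed
qed

end
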